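(* Assume the hypotheses in the context. Let $u\in\mathbb{U}_{\rm ad}$ and $y_0\in\mathbb{R}^n$, and for a time step $h>0$ let $\boldsymbol u=\{u(t_0),u(t_1),\dots\}$ with $t_i=ih$. Then $$\lim_{h\to0,\,k\to0}\left|\hat J(y_0,u)-\hat J_{h,k}(y_0,\boldsymbol u)\right|=0.$$
   Context: Let $f:\mathbb{R}^n\times\mathbb{R}^m\to\mathbb{R}^n$ and $g:\mathbb{R}^n\times\mathbb{R}^m\to\mathbb{R}$, $\lambda>0$, and $U_{\rm ad}\subset\mathbb{R}^m$ compact and convex. Hypotheses: $\|f(y,u)-f(\tilde y,u)\|_2\le L_f\|y-\tilde y\|_2$ and $\|f(y,u)-f(y,\tilde u)\|_2\le L_f\|u-\tilde u\|_2$ for all $y,\tilde y\in\mathbb{R}^n$, $u,\tilde u\in U_{\rm ad}$; $|g(y,u)-g(\tilde y,u)|\le L_g\|y-\tilde y\|_2$ and $|g(y,u)-g(y,\tilde u)|\le L_g\|u-\tilde u\|_2$ likewise; $f,g$ continuous; $\overline\Omega\subset\mathbb{R}^n$ is a bounded polyhedron with $\max_{1\le i\le n}|f_i(y,u)|\le M_f$ and $|g(y,u)|\le M_g$ for all $(y,u)\in\overline\Omega\times U_{\rm ad}$ (and $y+hf(y,u)\in\overline\Omega$ for $y\in\overline\Omega$, $u\in U_{\rm ad}$, $h$ small). Admissible controls: $\mathbb{U}_{\rm ad}=\{u\in L^2(0,\infty;\mathbb{R}^m): u(t)\in U_{\rm ad}\text{ a.e.}\}$, and controls are assumed Lipschitz: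 $\|u(t)-u(s)\|_2\le L_u|t-s|$. For $u\in\mathbb{U}_{\rm ad}$, $y(t)=y(y_0,u)(t)$ is the solution of $\dot y=f(y,u)$, $y(0)=y_0$, and $\hat J(y_0,u)=\int_0^\infty g(y(t),u(t))e^{-\lambda t}\,dt$. Fully discrete setting: a regular triangulation $\{S_j\}$ of $\overline\Omega$ by simplices with vertices $y_1,\dots,y_{n_s}$ and $k=\max_j\operatorname{diam}S_j$; $I_k$ denotes piecewise linear interpolation in the $y$ variable at the vertices. For a sequence $\boldsymbol u=\{u_0,u_1,\dots\}\subset U_{\rm ad}$ and $\delta_h=1-\lambda h$: $\hat y_0=y_0$, $\hat y_{n+1}=\hat y_n+hI_kf(\hat y_n,u_n)$, and $\hat J_{h,k}(y_0,\boldsymbol u)=h\sum_{n=0}^\infty\delta_h^n I_kg(\hat y_n,u_n)$. *)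

theory Defs
  imports "HOL-Analysis.Analysis"
begin

definition vertices_of :: "'a::euclidean_space set \<Rightarrow> 'a set" where
  "vertices_of S = {v. v extreme_point_of S}"

definition mesh :: "'a::euclidean_space set set \<Rightarrow> real" where
  "mesh \<T> = Max (diameter ` \<T>)"

definition interp :: "'a::euclidean_space set set \<Rightarrow> ('a \<Rightarrow> 'b::real_vector) \<Rightarrow> 'a \<Rightarrow> 'b" where
  "interp \<T> \<phi> y = (SOME z. \<exists>S\<in>\<T>. y \<in> S \<and>
      (\<exists>c. (\<forall>v\<in>vertices_of S. 0 \<le> c v) \<and> sum c (vertices_of S) = 1 \<and>
           (\<Sum>v\<in>vertices_of S. c v *\<^sub>R v) = y \<and>
           z = (\<Sum>v\<in>vertices_of S. c v *\<^sub>R \<phi> v)))"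

primrec yhat :: "('a::euclidean_space \<Rightarrow> 'c \<Rightarrow> 'a) \<Rightarrow> 'a set set \<Rightarrow> real \<Rightarrow> (nat \<Rightarrow> 'c) \<Rightarrow> 'a \<Rightarrow> nat \<Rightarrow> 'a" where
  "yhat f \<T> h uu y0 0 = y0"
| "yhat f \<T> h uu y0 (Suc n) =
     yhat f \<T> h uu y0 n + h *\<^sub>R interp \<T> (\<lambda>z. f z (uu n)) (yhat f \<T> h uu y0 n)"

definition J_hk :: "('a::euclidean_space \<Rightarrow> 'c \<Rightarrow> 'a) \<Rightarrow> ('a \<Rightarrow> 'c \<Rightarrow> real) \<Rightarrow> real \<Rightarrow>
    'a set set \<Rightarrow> real \<Rightarrow> (nat \<Rightarrow> 'c) \<Rightarrow> 'a \<Rightarrow> real" where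
  "J_hk f g lam \<T> h uu y0 =
     h * (\<Sum>n. (1 - lam * h) ^ n * interp \<T> (\<lambda>z. g z (uu n)) (yhat f \<T> h uu y0 n))"

definition J_cont :: "('a \<Rightarrow> 'c \<Rightarrow> real) \<Rightarrow> real \<Rightarrow> (real \<Rightarrow> 'a) \<Rightarrow> (real \<Rightarrow> 'c) \<Rightarrow> real" where
  "J_cont g lam y u = (LINT t:{0..}|lborel. g (y t) (u t) * exp (- lam * t))"

end

theory Submission
  imports Defs
begin

text \<open>Beyond a horizon \<open>T\<close> both costs are at most \<open>Mg e\<^sup>-\<^sup>\<lambda>\<^sup>T / \<lambda>\<close>, so it suffices to
  compare them on \<open>[0, T]\<close>. There the fully discrete trajectory is an explicit Euler scheme
  whose one-step defect is the interpolation error \<open>Lf k\<close>, and the discrete Gronwall lemma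
  bounds its distance to \<open>y\<close> by \<open>C (h + k)\<close>. With the Lipschitz bounds on \<open>g\<close> and \<open>u\<close>, the
  interpolation error of \<open>g\<close> and \<open>|e\<^sup>-\<^sup>\<lambda>\<^sup>t - (1 - \<lambda> h)\<^sup>n| = O(h)\<close>, the integrand and the
  discrete cost then differ by \<open>C (h + k)\<close> on every time step. The bounds \<open>Mf\<close> and \<open>Mg\<close>
  apply along \<open>y\<close> because its Euler polygons stay in the closed set \<open>\<Omega>\<close>.\<close>

section \<open>Piecewise linear interpolation\<close>

lemma triangulation_simplex_vertices:
  assumes "triangulation \<T>" "S \<in> \<T>"
  shows "finite (vertices_of S)" "vertices_of S \<subseteq> S"
    "convex hull (vertices_of S) = S" "bounded S"
proof -
  obtain n where "n simplex S"
    using assms unfolding triangulation_def by blast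
  then obtain C where C: "finite C" "S = convex hull C"
    unfolding simplex by blast
  then have "compact S" "convex S"
    by (auto simp: finite_imp_compact_convex_hull)
  then show "convex hull (vertices_of S) = S" "bounded S"
    unfolding vertices_of_def by (auto simp: Krein_Milman_Minkowski[symmetric] compact_imp_bounded)
  have "vertices_of S \<subseteq> C"
    unfolding vertices_of_def C(2) using extreme_point_of_convex_hull by blast
  then show "finite (vertices_of S)"
    using C(1) by (rule finite_subset)
  show "vertices_of S \<subseteq> S"
    unfolding vertices_of_def extreme_point_of_def by blast
qed

lemma diameter_le_mesh: "triangulation \<T> \<Longrightarrow> S \<in> \<T> \<Longrightarrow> diameter S \<le> mesh \<T>"
  unfolding mesh_def triangulation_def by simp

lemma interp_barycentric:
  fixes \<phi> :: "'a::euclidean_space \<Rightarrow> 'b::real_vector"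
  assumes "triangulation \<T>" "y \<in> \<Union>\<T>"
  obtains S c where "S \<in> \<T>" "y \<in> S" "finite (vertices_of S)" "vertices_of S \<subseteq> S"
    "\<And>v. v \<in> vertices_of S \<Longrightarrow> 0 \<le> c v" "sum c (vertices_of S) = 1"
    "(\<Sum>v\<in>vertices_of S. c v *\<^sub>R v) = y"
    "interp \<T> \<phi> y = (\<Sum>v\<in>vertices_of S. c v *\<^sub>R \<phi> v)"
proof -
  let ?P = "\<lambda>z. \<exists>S\<in>\<T>. y \<in> S \<and> (\<exists>c. (\<forall>v\<in>vertices_of S. 0 \<le> c v) \<and>
      sum c (vertices_of S) = 1 \<and> (\<Sum>v\<in>vertices_of S. c v *\<^sub>R v) = y \<and>
      z = (\<Sum>v\<in>vertices_of S. c v *\<^sub>R \<phi> v))"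
  obtain S where S: "S \<in> \<T>" "y \<in> S"
    using assms(2) by blast
  note vertices = triangulation_simplex_vertices[OF assms(1) S(1)]
  have "y \<in> convex hull (vertices_of S)"
    using S(2) vertices(3) by simp
  then obtain c where "\<forall>v\<in>vertices_of S. 0 \<le> c v" "sum c (vertices_of S) = 1"
    "(\<Sum>v\<in>vertices_of S. c v *\<^sub>R v) = y"
    unfolding convex_hull_finite[OF vertices(1)] by blast
  with S have "?P (\<Sum>v\<in>vertices_of S. c v *\<^sub>R \<phi> v)"
    by blast
  then have "?P (interp \<T> \<phi> y)"
    unfolding interp_def by (rule someI)
  then show ?thesis
    using that triangulation_simplex_vertices[OF assms(1)] by blast
qed

lemma interp_in_convex:
  fixes \<phi> :: "'a::euclidean_space \<Rightarrow> 'b::real_vector"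
  assumes "triangulation \<T>" "y \<in> \<Union>\<T>" "convex K" "\<And>v. v \<in> \<Union>\<T> \<Longrightarrow> \<phi> v \<in> K"
  shows "interp \<T> \<phi> y \<in> K"
proof -
  obtain S c where S: "S \<in> \<T>" "finite (vertices_of S)" "vertices_of S \<subseteq> S"
    and c: "\<And>v. v \<in> vertices_of S \<Longrightarrow> 0 \<le> c v" "sum c (vertices_of S) = 1"
    and I: "interp \<T> \<phi> y = (\<Sum>v\<in>vertices_of S. c v *\<^sub>R \<phi> v)"
    using interp_barycentric[OF assms(1,2), of \<phi>] by blast
  show ?thesis
    unfolding I using S(1,3) c(1) assms(4) by (intro convex_sum[OF S(2) assms(3) c(2)]) auto
qed

lemma norm_interp_diff_le:
  fixes \<phi> :: "'a::euclidean_space \<Rightarrow> 'b::real_normed_vector"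
  assumes "triangulation \<T>" "y \<in> \<Union>\<T>"
    and "\<And>v. v \<in> \<Union>\<T> \<Longrightarrow> dist v y \<le> mesh \<T> \<Longrightarrow> norm (\<phi> v - \<phi> y) \<le> e"
  shows "norm (interp \<T> \<phi> y - \<phi> y) \<le> e"
proof -
  obtain S c where S: "S \<in> \<T>" "y \<in> S" "vertices_of S \<subseteq> S"
    and c: "\<And>v. v \<in> vertices_of S \<Longrightarrow> 0 \<le> c v" "sum c (vertices_of S) = 1"
    and I: "interp \<T> \<phi> y = (\<Sum>v\<in>vertices_of S. c v *\<^sub>R \<phi> v)"
    using interp_barycentric[OF assms(1,2), of \<phi>] by blast
  have vertex_close: "norm (\<phi> v - \<phi> y) \<le> e" if "v \<in> vertices_of S" for v
    using that S triangulation_simplex_vertices(4)[OF assms(1) S(1)]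
      diameter_le_mesh[OF assms(1) S(1)] diameter_bounded_bound[of S v y] by (intro assms(3)) auto
  have "interp \<T> \<phi> y - \<phi> y = (\<Sum>v\<in>vertices_of S. c v *\<^sub>R (\<phi> v - \<phi> y))"
    using c by (simp add: I scaleR_diff_right sum_subtractf flip: scaleR_left.sum)
  also have "norm \<dots> \<le> (\<Sum>v\<in>vertices_of S. c v * e)"
    using c vertex_close by (intro order_trans[OF norm_sum sum_mono]) (auto intro: mult_left_mono)
  also have "\<dots> = e"
    using c by (simp flip: sum_distrib_right)
  finally show ?thesis .
qed

text \<open>Since \<open>y\<close> is the same barycentric combination of the vertices as the interpolant is of
  the nodal values, an interpolated Euler step is a convex combination of exact Euler steps
  taken from the vertices.\<close>
lemma interp_euler_step_in_convex:
  fixes F :: "'a::euclidean_space \<Rightarrow> 'a"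
  assumes "triangulation \<T>" "y \<in> \<Union>\<T>" "convex K"
    and "\<And>v. v \<in> \<Union>\<T> \<Longrightarrow> v + h *\<^sub>R F v \<in> K"
  shows "y + h *\<^sub>R interp \<T> F y \<in> K"
proof -
  obtain S c where S: "S \<in> \<T>" "finite (vertices_of S)" "vertices_of S \<subseteq> S"
    and c: "\<And>v. v \<in> vertices_of S \<Longrightarrow> 0 \<le> c v" "sum c (vertices_of S) = 1"
    and y: "(\<Sum>v\<in>vertices_of S. c v *\<^sub>R v) = y"
    and I: "interp \<T> F y = (\<Sum>v\<in>vertices_of S. c v *\<^sub>R F v)"
    using interp_barycentric[OF assms(1,2), of F] by blast
  have "y + h *\<^sub>R interp \<T> F y
      = (\<Sum>v\<in>vertices_of S. c v *\<^sub>R v) + h *\<^sub>R (\<Sum>v\<in>vertices_of S. c v *\<^sub>R F v)"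
    using I y by simp
  also have "\<dots> = (\<Sum>v\<in>vertices_of S. c v *\<^sub>R (v + h *\<^sub>R F v))"
    by (simp add: scaleR_right_distrib sum.distrib scaleR_sum_right mult.commute)
  also have "\<dots> \<in> K"
    using S(1,3) c(1) assms(4) by (intro convex_sum[OF S(2) assms(3) c(2)]) auto
  finally show ?thesis .
qed

lemma yhat_in_invariant_set:
  fixes f :: "'a::euclidean_space \<Rightarrow> 'c \<Rightarrow> 'a"
  assumes "triangulation \<T>" "convex (\<Union>\<T>)" "y0 \<in> \<Union>\<T>"
    and "\<And>n v. v \<in> \<Union>\<T> \<Longrightarrow> v + h *\<^sub>R f v (uu n) \<in> \<Union>\<T>"
  shows "yhat f \<T> h uu y0 n \<in> \<Union>\<T>"
proof (induction n)
  case (Suc n)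
  have "yhat f \<T> h uu y0 n + h *\<^sub>R interp \<T> (\<lambda>z. f z (uu n)) (yhat f \<T> h uu y0 n) \<in> \<Union>\<T>"
    by (rule interp_euler_step_in_convex[OF assms(1) Suc.IH assms(2) assms(4)])
  then show ?case
    by simp
qed (use assms(3) in simp)

lemma mesh_nonneg:
  assumes "triangulation \<T>" "\<T> \<noteq> {}"
  shows "0 \<le> mesh \<T>"
proof -
  obtain S where S: "S \<in> \<T>"
    using assms(2) by blast
  then have "0 \<le> diameter S"
    using triangulation_simplex_vertices(4)[OF assms(1)] by (simp add: diameter_ge_0)
  also have "\<dots> \<le> mesh \<T>"
    by (rule diameter_le_mesh[OF assms(1) S])
  finally show ?thesis .
qed

lemma discrete_gronwall:
  fixes E :: "nat \<Rightarrow> real"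
  assumes "E 0 \<le> 0" "0 \<le> h" "0 \<le> L" "0 \<le> D"
    and step: "\<And>m. m < n \<Longrightarrow> E (Suc m) \<le> (1 + h * L) * E m + h * D"
  shows "E n \<le> real n * h * exp (real n * h * L) * D"
  using step
proof (induction n)
  case 0
  then show ?case
    using assms(1) by simp
next
  case (Suc n)
  let ?X = "exp (real n * h * L)"
  have growth: "1 + h * L \<le> exp (h * L)"
    by (rule exp_ge_add_one_self)
  have "E (Suc n) \<le> (1 + h * L) * E n + h * D"
    using Suc.prems by simp
  also have "\<dots> \<le> (1 + h * L) * (real n * h * ?X * D) + h * D"
    using Suc assms by (intro add_right_mono mult_left_mono) auto
  also have "\<dots> \<le> exp (h * L) * (real n * h * ?X * D) + h * D"
    using assms growth by (intro add_right_mono mult_right_mono) auto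
  also have "\<dots> \<le> exp (h * L) * (real n * h * ?X * D) + h * (exp (h * L) * ?X) * D"
  proof -
    have "1 \<le> exp (h * L) * ?X"
      using assms by (simp flip: exp_add)
    then show ?thesis
      using assms mult_left_mono[of 1 "exp (h * L) * ?X" h]
      by (intro add_left_mono mult_right_mono) auto
  qed
  also have "\<dots> = real (Suc n) * h * exp (real (Suc n) * h * L) * D"
    by (simp add: algebra_simps flip: exp_add)
  finally show ?case .
qed

lemma power_diff_le_mult_diff:
  fixes a b :: real
  assumes "0 \<le> b" "b \<le> a" "a \<le> 1"
  shows "a ^ n - b ^ n \<le> real n * (a - b)"
proof (induction n)
  case (Suc n)
  have "a ^ Suc n - b ^ Suc n = a * (a ^ n - b ^ n) + b ^ n * (a - b)"
    by (simp add: algebra_simps)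
  also have "\<dots> \<le> 1 * (a ^ n - b ^ n) + 1 * (a - b)"
    using assms by (intro add_mono mult_right_mono) (auto simp: power_mono power_le_one)
  also have "\<dots> \<le> real (Suc n) * (a - b)"
    using Suc by (simp add: algebra_simps)
  finally show ?case .
qed simp

lemma exp_minus_le_one_minus_plus_square:
  fixes x :: real
  assumes "0 \<le> x"
  shows "exp (- x) \<le> 1 - x + x\<^sup>2"
proof -
  have "exp (- x) \<le> 1 / (1 + x)"
    using assms exp_ge_add_one_self[of x] by (simp add: exp_minus divide_inverse le_imp_inverse_le)
  also have "\<dots> = 1 - x + x\<^sup>2 / (1 + x)"
    using assms by (simp add: field_simps power2_eq_square)
  also have "\<dots> \<le> 1 - x + x\<^sup>2"
    using assms by (simp add: divide_le_eq power2_eq_square algebra_simps)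
  finally show ?thesis .
qed

lemma one_minus_power_approx_exp:
  fixes x :: real
  assumes "0 \<le> x" "x \<le> 1"
  shows "(1 - x) ^ n \<le> exp (- x) ^ n" "exp (- x) ^ n - (1 - x) ^ n \<le> real n * x\<^sup>2"
proof -
  have q: "0 \<le> 1 - x" "1 - x \<le> exp (- x)"
    using assms exp_ge_add_one_self[of "- x"] by auto
  then show "(1 - x) ^ n \<le> exp (- x) ^ n"
    by (intro power_mono)
  have "exp (- x) ^ n - (1 - x) ^ n \<le> real n * (exp (- x) - (1 - x))"
    using q assms by (intro power_diff_le_mult_diff) auto
  also have "\<dots> \<le> real n * x\<^sup>2"
    using exp_minus_le_one_minus_plus_square[OF assms(1)] by (intro mult_left_mono) auto
  finally show "exp (- x) ^ n - (1 - x) ^ n \<le> real n * x\<^sup>2" .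
qed

lemma exp_decay_within_step:
  fixes lam a h t :: real
  assumes "0 \<le> lam" "0 \<le> a" "a \<le> t" "t \<le> a + h"
  shows "exp (- lam * a) - lam * h \<le> exp (- lam * t)" "exp (- lam * t) \<le> exp (- lam * a)"
proof -
  let ?E = "exp (- lam * a)" and ?s = "t - a"
  have s: "0 \<le> lam * ?s" "lam * ?s \<le> lam * h"
    using assms by (auto intro: mult_left_mono)
  have E: "0 \<le> ?E" "?E \<le> 1"
    using assms by auto
  have t_split: "exp (- lam * t) = ?E * exp (- (lam * ?s))"
    by (simp add: algebra_simps flip: exp_add)
  show "exp (- lam * t) \<le> ?E"
    using assms by (simp add: mult_left_mono)
  have "?E * (lam * ?s) \<le> lam * h"
    using E s mult_left_le_one_le[of "lam * ?s" ?E] by simp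
  then have "?E - lam * h \<le> ?E * (1 - lam * ?s)"
    by (simp add: algebra_simps)
  also have "\<dots> \<le> exp (- lam * t)"
    unfolding t_split using E exp_ge_add_one_self[of "- (lam * ?s)"] by (intro mult_left_mono) auto
  finally show "?E - lam * h \<le> exp (- lam * t)" .
qed

lemma exp_approx_discount_factor:
  fixes lam h t :: real
  assumes "0 \<le> lam" "0 \<le> h" "lam * h \<le> 1" "real n * h \<le> t" "t \<le> real n * h + h"
  shows "\<bar>exp (- lam * t) - (1 - lam * h) ^ n\<bar> \<le> lam * h + real n * (lam * h)\<^sup>2"
proof -
  let ?E = "exp (- lam * (real n * h))"
  have "exp (- (lam * h)) ^ n = ?E"
    by (simp add: mult_ac flip: exp_of_nat_mult)
  then have "(1 - lam * h) ^ n \<le> ?E" "?E - (1 - lam * h) ^ n \<le> real n * (lam * h)\<^sup>2"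
    using one_minus_power_approx_exp[of "lam * h" n] assms by auto
  moreover have "?E - lam * h \<le> exp (- lam * t)" "exp (- lam * t) \<le> ?E"
    using assms by (intro exp_decay_within_step; simp)+
  ultimately show ?thesis
    unfolding abs_le_iff by linarith
qed

lemma eventually_exp_decay_less:
  fixes lam :: real
  assumes "0 < lam" "0 < \<epsilon>"
  shows "\<forall>\<^sub>F T in at_top. M * exp (- lam * T) / lam < \<epsilon>"
proof -
  have "LIM T at_top. - lam * T :> at_bot"
    using assms(1)
    by (intro filterlim_tendsto_neg_mult_at_bot[OF tendsto_const _ filterlim_ident]) simp
  then have "((\<lambda>T. exp (- lam * T)) \<longlongrightarrow> 0) at_top"
    by (rule filterlim_compose[OF exp_at_bot])
  then have "((\<lambda>T. M * exp (- lam * T) / lam) \<longlongrightarrow> 0) at_top"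
    by (intro tendsto_divide_zero tendsto_mult_right_zero)
  then show ?thesis
    by (rule order_tendstoD(2)) (rule assms(2))
qed

lemma grid_point_in_unit_window:
  fixes T h :: real
  assumes T: "0 \<le> T" and h: "0 < h" "h \<le> 1"
  obtains N :: nat where "T \<le> real N * h" "real N * h \<le> T + 1"
proof
  let ?N = "nat \<lceil>T / h\<rceil>"
  have "real ?N = of_int \<lceil>T / h\<rceil>"
    using T h by simp
  then have N: "T / h \<le> real ?N" "real ?N < T / h + 1"
    using ceiling_correct[of "T / h"] by linarith+
  have "T / h * h \<le> real ?N * h"
    using N(1) h by (intro mult_right_mono) auto
  then show "T \<le> real ?N * h"
    using h by simp
  have "real ?N * h < (T / h + 1) * h"
    by (rule mult_strict_right_mono[OF N(2) h(1)])
  then show "real ?N * h \<le> T + 1"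
    using h by (simp add: distrib_right)
qed

section \<open>Discounted integrals and their Riemann sums\<close>

lemma exp_dominated_integrable:
  fixes \<psi> :: "real \<Rightarrow> real"
  assumes lam: "0 < lam" and cont: "continuous_on {a..} \<psi>"
    and bound: "\<And>t. a \<le> t \<Longrightarrow> \<bar>\<psi> t\<bar> \<le> M * exp (- lam * t)"
  shows "\<psi> absolutely_integrable_on {a..}"
    and "\<bar>integral {a..} \<psi>\<bar> \<le> M * exp (- lam * a) / lam"
proof -
  have majorant: "((\<lambda>t. M * exp (- lam * t)) has_integral M * exp (- lam * a) / lam) {a..}"
    using has_integral_mult_right[OF has_integral_exp_minus_to_infinity[OF lam, of a], of M]
    by simp
  show abs_int: "\<psi> absolutely_integrable_on {a..}"
    using bound majorant
    by (intro measurable_bounded_by_integrable_imp_absolutely_integrable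
        continuous_imp_measurable_on_sets_lebesgue[OF cont]) auto
  have "norm (integral {a..} \<psi>) \<le> integral {a..} (\<lambda>t. M * exp (- lam * t))"
    using bound majorant set_lebesgue_integral_eq_integral(1)[OF abs_int]
    by (intro integral_norm_bound_integral) auto
  also have "\<dots> = M * exp (- lam * a) / lam"
    by (rule integral_unique[OF majorant])
  finally show "\<bar>integral {a..} \<psi>\<bar> \<le> M * exp (- lam * a) / lam"
    by simp
qed

lemma integral_split_uniform_intervals:
  fixes \<psi> :: "real \<Rightarrow> 'a::banach"
  assumes cont: "continuous_on {0..real N * h} \<psi>" and h: "0 \<le> h"
  shows "integral {0..real N * h} \<psi> = (\<Sum>i<N. integral {real i * h..real i * h + h} \<psi>)"
  using cont
proof (induction N)
  case (Suc N)
  have le: "real N * h \<le> real (Suc N) * h"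
    using h by (simp add: mult_right_mono)
  have "integral {0..real N * h} \<psi> + integral {real N * h..real (Suc N) * h} \<psi>
      = integral {0..real (Suc N) * h} \<psi>"
    using h le Suc.prems
    by (intro Henstock_Kurzweil_Integration.integral_combine integrable_continuous_real) auto
  moreover have "continuous_on {0..real N * h} \<psi>"
    by (rule continuous_on_subset[OF Suc.prems]) (use le in auto)
  ultimately show ?case
    using Suc.IH by (simp add: algebra_simps)
qed simp

lemma geometric_weighted_tail:
  fixes q :: real and G :: "nat \<Rightarrow> real"
  assumes q: "0 \<le> q" "q < 1" and G: "\<And>n. \<bar>G n\<bar> \<le> M"
  shows "summable (\<lambda>n. q ^ n * G n)"
    and "\<bar>\<Sum>n. q ^ (n + N) * G (n + N)\<bar> \<le> M * q ^ N / (1 - q)"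
proof -
  have bound: "norm (q ^ (n + N) * G (n + N)) \<le> M * q ^ N * q ^ n" for n
  proof -
    have "\<bar>G (n + N)\<bar> * (q ^ N * q ^ n) \<le> M * (q ^ N * q ^ n)"
      using q by (intro mult_right_mono G) simp
    then show ?thesis
      using q by (simp add: abs_mult power_add mult_ac)
  qed
  have geometric: "summable (\<lambda>n. M * q ^ N * q ^ n)"
    using q by (intro summable_mult summable_geometric) simp
  then have norm_tail: "summable (\<lambda>n. norm (q ^ (n + N) * G (n + N)))"
    using bound by (intro summable_comparison_test'[where N = 0, OF geometric]) auto
  then show "summable (\<lambda>n. q ^ n * G n)"
    using summable_iff_shift[of "\<lambda>n. q ^ n * G n" N] summable_norm_cancel by fastforce
  have "\<bar>\<Sum>n. q ^ (n + N) * G (n + N)\<bar> \<le> (\<Sum>n. norm (q ^ (n + N) * G (n + N)))"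
    using summable_norm[OF norm_tail] by simp
  also have "\<dots> \<le> (\<Sum>n. M * q ^ N * q ^ n)"
    by (rule suminf_le[OF bound norm_tail geometric])
  also have "\<dots> = M * q ^ N / (1 - q)"
    using q by (simp add: suminf_mult suminf_geometric divide_inverse)
  finally show "\<bar>\<Sum>n. q ^ (n + N) * G (n + N)\<bar> \<le> M * q ^ N / (1 - q)" .
qed

lemma integral_atLeast_split:
  fixes \<psi> :: "real \<Rightarrow> 'a::banach"
  assumes "a \<le> b" "\<psi> integrable_on {a..b}" "\<psi> integrable_on {b..}"
  shows "integral {a..} \<psi> = integral {a..b} \<psi> + integral {b..} \<psi>"
proof -
  have "(\<psi> has_integral (integral {a..b} \<psi> + integral {b..} \<psi>)) ({a..b} \<union> {b..})"
    using assms
    by (intro has_integral_Un) (auto simp: negligible_sing[of b, THEN negligible_subset])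
  moreover have "{a..b} \<union> {b..} = {a..}"
    using assms(1) by auto
  ultimately show ?thesis
    by (simp add: integral_unique)
qed

lemma abs_integral_diff_riemann_sum_le:
  fixes \<psi> :: "real \<Rightarrow> real"
  assumes cont: "continuous_on {0..real N * h} \<psi>" and h: "0 < h"
    and close: "\<And>n t. n < N \<Longrightarrow> t \<in> {real n * h..real n * h + h} \<Longrightarrow> \<bar>\<psi> t - c n\<bar> \<le> \<eta>"
  shows "\<bar>integral {0..real N * h} \<psi> - h * (\<Sum>n<N. c n)\<bar> \<le> real N * h * \<eta>"
proof -
  have "\<bar>integral {real n * h..real n * h + h} \<psi> - h * c n\<bar> \<le> h * \<eta>" if n: "n < N" for n
  proof -
    let ?I = "{real n * h..real n * h + h}"
    have "real n * h + h \<le> real N * h"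
      using n h mult_right_mono[of "real (Suc n)" "real N" h] by (simp add: algebra_simps)
    then have "\<psi> integrable_on ?I"
      using h by (intro integrable_continuous_real continuous_on_subset[OF cont]) auto
    then have "((\<lambda>t. \<psi> t - c n) has_integral (integral ?I \<psi> - h * c n)) ?I"
      using has_integral_diff[OF integrable_integral has_integral_const_real] h by fastforce
    moreover have "\<bar>\<psi> (real n * h) - c n\<bar> \<le> \<eta>"
      using close[OF n] h by simp
    then have "0 \<le> \<eta>"
      by (rule order_trans[OF abs_ge_zero])
    ultimately have "norm (integral ?I \<psi> - h * c n) \<le> \<eta> * measure lborel ?I"
      using close[OF n] by (intro has_integral_bound_real[OF _ finite.emptyI]) auto
    then show ?thesis
      using h by (simp add: mult.commute)
  qed
  note per_step = this
  have "integral {0..real N * h} \<psi> - h * (\<Sum>n<N. c n)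
      = (\<Sum>n<N. integral {real n * h..real n * h + h} \<psi> - h * c n)"
    by (simp add: integral_split_uniform_intervals[OF cont less_imp_le[OF h]] sum_subtractf
        sum_distrib_left)
  then have "\<bar>integral {0..real N * h} \<psi> - h * (\<Sum>n<N. c n)\<bar>
      \<le> (\<Sum>n<N. \<bar>integral {real n * h..real n * h + h} \<psi> - h * c n\<bar>)"
    by (simp only: sum_abs)
  also have "\<dots> \<le> of_nat (card {..<N}) * (h * \<eta>)"
    using per_step by (intro sum_bounded_above) auto
  finally show ?thesis
    by (simp add: mult_ac)
qed

lemma abs_discounted_sum_tail_le:
  fixes G :: "nat \<Rightarrow> real"
  assumes lam: "0 < lam" and h: "0 < h" "lam * h \<le> 1" and G: "\<And>n. \<bar>G n\<bar> \<le> M"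
  shows "\<bar>h * (\<Sum>n. (1 - lam * h) ^ (n + N) * G (n + N))\<bar> \<le> M * exp (- lam * (real N * h)) / lam"
proof -
  let ?q = "1 - lam * h"
  have q: "0 \<le> ?q" "?q < 1"
    using lam h by auto
  have "?q ^ N \<le> exp (- (lam * h)) ^ N"
    using q exp_ge_add_one_self[of "- (lam * h)"] by (intro power_mono) auto
  also have "\<dots> = exp (- lam * (real N * h))"
    by (simp add: mult_ac flip: exp_of_nat_mult)
  finally have weight: "h * (M * ?q ^ N / (1 - ?q)) \<le> M * exp (- lam * (real N * h)) / lam"
    using h lam G[of 0] by (simp add: divide_right_mono mult_left_mono)
  have "\<bar>\<Sum>n. ?q ^ (n + N) * G (n + N)\<bar> \<le> M * ?q ^ N / (1 - ?q)"
    by (rule geometric_weighted_tail(2)[OF q]) (rule G)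
  then have "\<bar>h * (\<Sum>n. ?q ^ (n + N) * G (n + N))\<bar> \<le> h * (M * ?q ^ N / (1 - ?q))"
    using mult_left_mono[OF _ less_imp_le[OF h(1)]] by (simp only: abs_mult abs_of_pos[OF h(1)])
  with weight show ?thesis
    by linarith
qed

lemma discounted_integral_approx:
  fixes \<psi> :: "real \<Rightarrow> real" and G :: "nat \<Rightarrow> real"
  assumes lam: "0 < lam" and h: "0 < h" "lam * h \<le> 1"
    and cont: "continuous_on {0..} \<psi>"
    and \<psi>_bound: "\<And>t. 0 \<le> t \<Longrightarrow> \<bar>\<psi> t\<bar> \<le> M * exp (- lam * t)"
    and G_bound: "\<And>n. \<bar>G n\<bar> \<le> M"
    and close: "\<And>n t. n < N \<Longrightarrow> t \<in> {real n * h..real n * h + h} \<Longrightarrow>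
      \<bar>\<psi> t - (1 - lam * h) ^ n * G n\<bar> \<le> \<eta>"
  shows "\<bar>integral {0..} \<psi> - h * (\<Sum>n. (1 - lam * h) ^ n * G n)\<bar>
    \<le> real N * h * \<eta> + 2 * M * exp (- lam * (real N * h)) / lam"
proof -
  let ?q = "1 - lam * h" and ?T = "real N * h"
  have T: "0 \<le> ?T"
    using h by simp
  have cont_T: "continuous_on {0..?T} \<psi>"
    by (rule continuous_on_subset[OF cont]) auto
  have cont_tail: "continuous_on {?T..} \<psi>"
    by (rule continuous_on_subset[OF cont]) (use T in auto)
  have "\<psi> absolutely_integrable_on {?T..}"
    by (rule exp_dominated_integrable(1)[OF lam cont_tail \<psi>_bound]) (use T in auto)
  then have integral_split: "integral {0..} \<psi> = integral {0..?T} \<psi> + integral {?T..} \<psi>"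
    by (intro integral_atLeast_split[OF T integrable_continuous_real[OF cont_T]]
        set_lebesgue_integral_eq_integral(1))
  have sum_split: "(\<Sum>n. ?q ^ n * G n) = (\<Sum>n. ?q ^ (n + N) * G (n + N)) + (\<Sum>n<N. ?q ^ n * G n)"
    by (rule suminf_split_initial_segment[OF geometric_weighted_tail(1)])
      (use lam h G_bound in auto)
  have "integral {0..} \<psi> - h * (\<Sum>n. ?q ^ n * G n)
      = (integral {0..?T} \<psi> - h * (\<Sum>n<N. ?q ^ n * G n)) + integral {?T..} \<psi>
        - h * (\<Sum>n. ?q ^ (n + N) * G (n + N))" (is "_ = ?A + ?B - ?C")
    unfolding integral_split sum_split by (simp add: algebra_simps)
  moreover have "\<bar>?A\<bar> \<le> ?T * \<eta>"
    using close by (intro abs_integral_diff_riemann_sum_le[OF cont_T h(1)])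
  moreover have "\<bar>?B\<bar> \<le> M * exp (- lam * ?T) / lam"
    using \<psi>_bound T by (intro exp_dominated_integrable(2)[OF lam cont_tail]) auto
  moreover have "\<bar>?C\<bar> \<le> M * exp (- lam * ?T) / lam"
    by (rule abs_discounted_sum_tail_le[OF lam h G_bound])
  ultimately show ?thesis
    using abs_triangle_ineq4[of "?A + ?B" ?C] abs_triangle_ineq[of ?A ?B] by simp
qed

section \<open>Controlled trajectories\<close>

lemma continuous_on_lipschitz_compose:
  fixes F :: "'a::real_normed_vector \<Rightarrow> 'c::real_normed_vector \<Rightarrow> 'b::real_normed_vector"
  assumes lip_z: "\<And>z z' v. v \<in> U \<Longrightarrow> norm (F z v - F z' v) \<le> L * norm (z - z')"
    and lip_v: "\<And>z v v'. v \<in> U \<Longrightarrow> v' \<in> U \<Longrightarrow> norm (F z v - F z v') \<le> L * norm (v - v')"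
    and y: "continuous_on S y" and u: "continuous_on S u" and uU: "u ` S \<subseteq> U"
  shows "continuous_on S (\<lambda>s. F (y s) (u s))"
  unfolding continuous_on_def
proof
  fix t assume t: "t \<in> S"
  have "norm (F (y s) (u s) - F (y t) (u t)) \<le> L * norm (y s - y t) + L * norm (u s - u t)"
    if "s \<in> S" for s
  proof -
    have "norm (F (y s) (u s) - F (y t) (u t))
        \<le> norm (F (y s) (u s) - F (y t) (u s)) + norm (F (y t) (u s) - F (y t) (u t))"
      by (rule norm_diff_triangle_le) auto
    then show ?thesis
      using lip_z[of "u s" "y s" "y t"] lip_v[of "u s" "u t" "y t"] that t uU by fastforce
  qed
  then have "\<forall>\<^sub>F s in at t within S.
      norm (F (y s) (u s) - F (y t) (u t)) \<le> L * norm (y s - y t) + L * norm (u s - u t)"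
    by (auto simp: eventually_at_filter)
  moreover have "((\<lambda>s. L * norm (y s - y t) + L * norm (u s - u t))
      \<longlongrightarrow> L * norm (y t - y t) + L * norm (u t - u t)) (at t within S)"
    using y u t unfolding continuous_on_def by (intro tendsto_intros) auto
  ultimately show "((\<lambda>s. F (y s) (u s)) \<longlongrightarrow> F (y t) (u t)) (at t within S)"
    unfolding Lim_null[of "\<lambda>s. F (y s) (u s)"] by (auto intro: Lim_null_comparison)
qed

lemma continuous_on_AE_in_closed:
  fixes u :: "real \<Rightarrow> 'a::metric_space"
  assumes cont: "continuous_on {a..} u" and U: "closed U"
    and AE_in: "AE t in lborel. a \<le> t \<longrightarrow> u t \<in> U" and t: "a \<le> t"
  shows "u t \<in> U"
proof (rule ccontr)
  assume "u t \<notin> U"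
  then obtain e where e: "0 < e" "ball (u t) e \<subseteq> - U"
    using U open_contains_ball[of "- U"] by auto
  then obtain d where d: "0 < d" "\<And>s. s \<in> {a..} \<Longrightarrow> dist s t < d \<Longrightarrow> dist (u s) (u t) < e"
    using cont t unfolding continuous_on_iff by (metis atLeast_iff)
  have "{t<..<t + d} \<subseteq> {s \<in> space lborel. \<not> (a \<le> s \<longrightarrow> u s \<in> U)}"
  proof
    fix s assume s: "s \<in> {t<..<t + d}"
    then have "u s \<in> ball (u t) e"
      using d(2)[of s] t by (simp add: dist_real_def dist_commute)
    with e(2) s t show "s \<in> {s \<in> space lborel. \<not> (a \<le> s \<longrightarrow> u s \<in> U)}"
      by auto
  qed
  moreover obtain N where "{s \<in> space lborel. \<not> (a \<le> s \<longrightarrow> u s \<in> U)} \<subseteq> N"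
      "emeasure lborel N = 0" "N \<in> sets lborel"
    using AE_in by (rule AE_E)
  ultimately have "emeasure lborel {t<..<t + d} \<le> 0"
    by (metis emeasure_mono order_trans)
  then show False
    using d(1) by simp
qed

lemma lipschitz_constant_nonneg:
  fixes F :: "'a::euclidean_space \<Rightarrow> 'b::real_normed_vector"
  assumes "\<And>z z'. norm (F z - F z') \<le> L * norm (z - z')"
  shows "0 \<le> L"
proof -
  obtain b :: 'a where "b \<in> Basis"
    using nonempty_Basis by blast
  then have "norm (F b - F 0) \<le> L"
    using assms[of b 0] by simp
  then show ?thesis
    by (rule order_trans[OF norm_ge_zero])
qed

locale controlled_trajectory =
  fixes f :: "'a::banach \<Rightarrow> 'c::real_normed_vector \<Rightarrow> 'a"
    and Uad :: "'c set" and Lf Lu :: real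
    and u :: "real \<Rightarrow> 'c" and y :: "real \<Rightarrow> 'a"
  assumes f_lip_y: "\<And>z z' v. v \<in> Uad \<Longrightarrow> norm (f z v - f z' v) \<le> Lf * norm (z - z')"
    and f_lip_u: "\<And>z v v'. v \<in> Uad \<Longrightarrow> v' \<in> Uad \<Longrightarrow> norm (f z v - f z v') \<le> Lf * norm (v - v')"
    and Lf_nonneg: "0 \<le> Lf"
    and u_in: "\<And>t. 0 \<le> t \<Longrightarrow> u t \<in> Uad"
    and u_lipschitz: "Lu-lipschitz_on {0..} u"
    and y_ode: "\<And>t. 0 \<le> t \<Longrightarrow> (y has_vector_derivative f (y t) (u t)) (at t within {0..})"
begin

lemma Lu_nonneg: "0 \<le> Lu"
  using u_lipschitz by (rule lipschitz_on_nonneg)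

lemma norm_u_diff_le: "0 \<le> s \<Longrightarrow> 0 \<le> t \<Longrightarrow> norm (u s - u t) \<le> Lu * \<bar>s - t\<bar>"
  using lipschitz_on_normD[OF u_lipschitz] by simp

lemma y_continuous: "continuous_on {0..} y"
  unfolding continuous_on_eq_continuous_within
  using has_vector_derivative_continuous[OF y_ode] by auto

lemma field_continuous: "continuous_on {0..} (\<lambda>s. f (y s) (u s))"
  using u_in by (intro continuous_on_lipschitz_compose[OF f_lip_y f_lip_u y_continuous
      lipschitz_on_continuous_on[OF u_lipschitz]]) auto

lemma has_integral_field:
  assumes "0 \<le> a" "a \<le> b"
  shows "((\<lambda>s. f (y s) (u s)) has_integral (y b - y a)) {a..b}"
proof (rule fundamental_theorem_of_calculus[OF assms(2)])
  fix s assume "s \<in> {a..b}"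
  with assms show "(y has_vector_derivative f (y s) (u s)) (at s within {a..b})"
    by (intro has_vector_derivative_within_subset[OF y_ode]) auto
qed

lemma norm_y_diff_le:
  assumes "0 \<le> a" "a \<le> b" "\<And>s. s \<in> {a..b} \<Longrightarrow> norm (f (y s) (u s)) \<le> B"
  shows "norm (y b - y a) \<le> B * (b - a)"
proof -
  have "norm (f (y a) (u a)) \<le> B"
    using assms by simp
  then have "0 \<le> B"
    by (rule order_trans[OF norm_ge_zero])
  with has_integral_bound_real[OF _ finite.emptyI has_integral_field[OF assms(1,2)]] assms
  show ?thesis by simp
qed

text \<open>Over one step the field changes by at most \<open>Lf (B + Lu) h\<close>: \<open>y\<close> moves with speed at most
  \<open>B\<close> and the control with speed at most \<open>Lu\<close>.\<close>
lemma euler_local_error: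
  assumes a: "0 \<le> a" and h: "0 \<le> h" and B: "\<And>s. s \<in> {a..a + h} \<Longrightarrow> norm (f (y s) (u s)) \<le> B"
  shows "norm (y (a + h) - y a - h *\<^sub>R f (y a) (u a)) \<le> h * (Lf * (B + Lu) * h)"
proof -
  let ?F = "f (y a) (u a)"
  have B0: "0 \<le> B"
    using B[of a] h by (simp add: order_trans[OF norm_ge_zero])
  have I: "((\<lambda>s. f (y s) (u s) - ?F) has_integral (y (a + h) - y a - h *\<^sub>R ?F)) {a..a + h}"
    using has_integral_diff[OF has_integral_field[OF a] has_integral_const_real[of ?F a "a + h"]] h
    by simp
  have "norm (f (y s) (u s) - ?F) \<le> Lf * (B + Lu) * h" if s: "s \<in> {a..a + h}" for s
  proof -
    have us: "u s \<in> Uad" "u a \<in> Uad"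
      using u_in a s by auto
    have "norm (y s - y a) \<le> B * (s - a)"
      using norm_y_diff_le[of a s B] B s a by force
    also have "\<dots> \<le> B * h"
      using B0 s by (intro mult_left_mono) auto
    finally have state: "norm (f (y s) (u s) - f (y a) (u s)) \<le> Lf * (B * h)"
      by (rule order_trans[OF f_lip_y[OF us(1)] mult_left_mono[OF _ Lf_nonneg]])
    have "norm (u s - u a) \<le> Lu * (s - a)"
      using norm_u_diff_le[of s a] s a by force
    also have "\<dots> \<le> Lu * h"
      using Lu_nonneg s by (intro mult_left_mono) auto
    finally have control: "norm (f (y a) (u s) - ?F) \<le> Lf * (Lu * h)"
      by (rule order_trans[OF f_lip_u[OF us] mult_left_mono[OF _ Lf_nonneg]])
    have "norm (f (y s) (u s) - ?F)
        \<le> norm (f (y s) (u s) - f (y a) (u s)) + norm (f (y a) (u s) - ?F)"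
      by (rule norm_diff_triangle_le) auto
    with state control show ?thesis
      by (simp add: algebra_simps)
  qed
  then have "norm (y (a + h) - y a - h *\<^sub>R ?F) \<le> Lf * (B + Lu) * h * measure lborel {a..a + h}"
    using Lf_nonneg B0 Lu_nonneg h by (intro has_integral_bound_real[OF _ finite.emptyI I]) auto
  then show ?thesis
    using h by (simp add: mult_ac)
qed

lemma euler_error_step:
  assumes a: "0 \<le> a" and h: "0 \<le> h" and B: "\<And>s. s \<in> {a..a + h} \<Longrightarrow> norm (f (y s) (u s)) \<le> B"
    and defect: "norm (z' - z - h *\<^sub>R f z (u a)) \<le> h * D"
  shows "norm (y (a + h) - z') \<le> (1 + h * Lf) * norm (y a - z) + h * (D + Lf * (B + Lu) * h)"
proof -
  have local: "norm (y (a + h) - y a - h *\<^sub>R f (y a) (u a)) \<le> h * (Lf * (B + Lu) * h)"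
    by (rule euler_local_error[OF a h B])
  have lip: "norm (h *\<^sub>R (f (y a) (u a) - f z (u a))) \<le> h * (Lf * norm (y a - z))"
    using mult_left_mono[OF f_lip_y[OF u_in[OF a]], of h "y a" z] h by simp
  have "y (a + h) - z' = (y (a + h) - y a - h *\<^sub>R f (y a) (u a)) - (z' - z - h *\<^sub>R f z (u a))
      + (y a - z) + h *\<^sub>R (f (y a) (u a) - f z (u a))"
    by (simp add: scaleR_diff_right)
  also have "norm \<dots> \<le> h * (Lf * (B + Lu) * h) + h * D + norm (y a - z) + h * (Lf * norm (y a - z))"
  proof -
    have "norm (p - q + r + w) \<le> norm p + norm q + norm r + norm w" for p q r w :: 'a
      using norm_triangle_ineq[of "p - q + r" w] norm_triangle_ineq[of "p - q" r]
        norm_triangle_ineq4[of p q] by linarith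
    then show ?thesis
      using local defect lip by (smt (verit))
  qed
  finally show ?thesis
    by (simp add: algebra_simps)
qed

lemma perturbed_euler_error:
  assumes h: "0 < h" and D: "0 \<le> D"
    and B: "\<And>s. s \<in> {0..real n * h} \<Longrightarrow> norm (f (y s) (u s)) \<le> B"
    and z0: "z 0 = y 0"
    and defect: "\<And>m. m < n \<Longrightarrow>
      norm (z (Suc m) - z m - h *\<^sub>R f (z m) (u (real m * h))) \<le> h * D"
  shows "norm (y (real n * h) - z n)
    \<le> real n * h * exp (real n * h * Lf) * (D + Lf * (B + Lu) * h)"
proof (rule discrete_gronwall[where E = "\<lambda>m. norm (y (real m * h) - z m)"])
  show "norm (y (real 0 * h) - z 0) \<le> 0" "0 \<le> h" "0 \<le> Lf"
    using z0 h Lf_nonneg by auto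
  have "0 \<le> B"
    using B[of 0] h by (simp add: order_trans[OF norm_ge_zero])
  then show "0 \<le> D + Lf * (B + Lu) * h"
    using h D Lf_nonneg Lu_nonneg by simp
  fix m assume m: "m < n"
  have a: "0 \<le> real m * h" and step: "real (Suc m) * h = real m * h + h"
    using h by (auto simp: distrib_right)
  have "real m * h + h \<le> real n * h"
    unfolding step[symmetric] using m h by (intro mult_right_mono) auto
  then have "norm (f (y s) (u s)) \<le> B" if "s \<in> {real m * h..real m * h + h}" for s
    using a that by (intro B) (simp only: atLeastAtMost_iff, linarith)
  then show "norm (y (real (Suc m) * h) - z (Suc m))
      \<le> (1 + h * Lf) * norm (y (real m * h) - z m) + h * (D + Lf * (B + Lu) * h)"
    unfolding step using h by (intro euler_error_step[OF a _ _ defect[OF m]]) auto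
qed

definition euler_polygon :: "real \<Rightarrow> nat \<Rightarrow> 'a" where
  "euler_polygon h = rec_nat (y 0) (\<lambda>n w. w + h *\<^sub>R f w (u (real n * h)))"

lemma euler_polygon_simps [simp]:
  "euler_polygon h 0 = y 0"
  "euler_polygon h (Suc n) = euler_polygon h n + h *\<^sub>R f (euler_polygon h n) (u (real n * h))"
  by (simp_all add: euler_polygon_def)

lemma euler_polygon_in_invariant_set:
  assumes "y 0 \<in> K" "0 \<le> h"
    and invariant: "\<And>z v. z \<in> K \<Longrightarrow> v \<in> Uad \<Longrightarrow> z + h *\<^sub>R f z v \<in> K"
  shows "euler_polygon h n \<in> K"
  by (induction n) (use assms u_in in auto)

lemma euler_polygon_tendsto:
  assumes t: "0 < t"
  shows "(\<lambda>N. euler_polygon (t / real N) N) \<longlonglongrightarrow> y t"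
proof -
  have "compact ((\<lambda>s. f (y s) (u s)) ` {0..t})"
    by (rule compact_continuous_image[OF continuous_on_subset[OF field_continuous]]) auto
  then have "bounded ((\<lambda>s. f (y s) (u s)) ` {0..t})"
    by (rule compact_imp_bounded)
  then obtain B where "\<forall>x\<in>(\<lambda>s. f (y s) (u s)) ` {0..t}. norm x \<le> B"
    unfolding bounded_iff by blast
  then have B: "\<And>s. s \<in> {0..t} \<Longrightarrow> norm (f (y s) (u s)) \<le> B"
    by simp
  define C where "C = t * exp (t * Lf) * (Lf * (B + Lu)) * t"
  have "norm (euler_polygon (t / real N) N - y t) \<le> C / real N" if N: "0 < N" for N
  proof -
    have h: "0 < t / real N" "real N * (t / real N) = t"
      using t N by auto
    then have "norm (y (real N * (t / real N)) - euler_polygon (t / real N) N)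
        \<le> real N * (t / real N) * exp (real N * (t / real N) * Lf)
          * (0 + Lf * (B + Lu) * (t / real N))"
      using B by (intro perturbed_euler_error) auto
    then show ?thesis
      unfolding h(2) by (simp add: C_def norm_minus_commute)
  qed
  then have "\<forall>\<^sub>F N in sequentially. norm (euler_polygon (t / real N) N - y t) \<le> C / real N"
    by (rule eventually_mono[OF eventually_gt_at_top[of 0]])
  then have "(\<lambda>N. euler_polygon (t / real N) N - y t) \<longlonglongrightarrow> 0"
    by (rule Lim_null_comparison) (rule lim_const_over_n)
  then show ?thesis
    by (simp add: Lim_null[symmetric])
qed

lemma trajectory_in_invariant_set:
  assumes K: "closed K" "y 0 \<in> K" and h0: "0 < h0"
    and invariant: "\<And>h z v. 0 < h \<Longrightarrow> h \<le> h0 \<Longrightarrow> z \<in> K \<Longrightarrow> v \<in> Uad \<Longrightarrow> z + h *\<^sub>R f z v \<in> K"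
    and t: "0 \<le> t"
  shows "y t \<in> K"
proof (cases "t = 0")
  case False
  with t have t: "0 < t"
    by simp
  have "\<forall>\<^sub>F N in sequentially. euler_polygon (t / real N) N \<in> K"
  proof (rule eventually_mono[OF eventually_ge_at_top[of "nat \<lceil>t / h0\<rceil> + 1"]])
    fix N assume "nat \<lceil>t / h0\<rceil> + 1 \<le> N"
    then have "t / h0 < real N"
      by linarith
    moreover have "0 < t / h0"
      using t h0 by simp
    ultimately have "0 < real N" "t \<le> h0 * real N"
      using h0 by (linarith, simp add: field_simps)
    then have "0 < t / real N" "t / real N \<le> h0"
      using t by (auto simp: field_simps)
    then show "euler_polygon (t / real N) N \<in> K"
      using K(2) invariant by (intro euler_polygon_in_invariant_set) auto
  qed
  then show ?thesis
    by (rule Lim_in_closed_set[OF K(1) _ _ euler_polygon_tendsto[OF t]]) simp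
qed (use K in simp)

end

section \<open>The fully discrete scheme\<close>

locale discounted_control_problem = controlled_trajectory f Uad Lf Lu u y
  for f :: "'a::euclidean_space \<Rightarrow> 'c::real_normed_vector \<Rightarrow> 'a" and Uad Lf Lu u y +
  fixes g :: "'a \<Rightarrow> 'c \<Rightarrow> real" and lam Lg B Mg h0 :: real and \<Omega> :: "'a set"
  assumes g_lip_y: "\<And>z z' v. v \<in> Uad \<Longrightarrow> \<bar>g z v - g z' v\<bar> \<le> Lg * norm (z - z')"
    and g_lip_u: "\<And>z v v'. v \<in> Uad \<Longrightarrow> v' \<in> Uad \<Longrightarrow> \<bar>g z v - g z v'\<bar> \<le> Lg * norm (v - v')"
    and Lg_nonneg: "0 \<le> Lg" and lam_pos: "0 < lam"
    and Omega_closed: "closed \<Omega>" and Omega_convex: "convex \<Omega>"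
    and f_bound: "\<And>z v. z \<in> \<Omega> \<Longrightarrow> v \<in> Uad \<Longrightarrow> norm (f z v) \<le> B"
    and g_bound: "\<And>z v. z \<in> \<Omega> \<Longrightarrow> v \<in> Uad \<Longrightarrow> \<bar>g z v\<bar> \<le> Mg"
    and h0_pos: "0 < h0"
    and Omega_invariant: "\<And>h z v. 0 < h \<Longrightarrow> h \<le> h0 \<Longrightarrow> z \<in> \<Omega> \<Longrightarrow> v \<in> Uad \<Longrightarrow>
      z + h *\<^sub>R f z v \<in> \<Omega>"
    and y0_in: "y 0 \<in> \<Omega>"
begin

lemma y_in_Omega: "0 \<le> t \<Longrightarrow> y t \<in> \<Omega>"
  by (rule trajectory_in_invariant_set[OF Omega_closed y0_in h0_pos Omega_invariant])

lemma norm_field_le: "0 \<le> t \<Longrightarrow> norm (f (y t) (u t)) \<le> B"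
  by (intro f_bound y_in_Omega u_in)

lemma B_nonneg: "0 \<le> B"
  using norm_field_le[of 0] by (simp add: order_trans[OF norm_ge_zero])

lemma Mg_nonneg: "0 \<le> Mg"
  using g_bound[OF y0_in u_in[of 0]] by simp

definition discounted_cost :: "real \<Rightarrow> real" where
  "discounted_cost t = g (y t) (u t) * exp (- lam * t)"

lemma discounted_cost_continuous: "continuous_on {0..} discounted_cost"
proof -
  have "continuous_on {0..} (\<lambda>t. g (y t) (u t))"
    using u_in by (intro continuous_on_lipschitz_compose[where F = g and U = Uad and L = Lg,
        OF _ _ y_continuous lipschitz_on_continuous_on[OF u_lipschitz]])
      (auto simp: g_lip_y g_lip_u)
  then show ?thesis
    unfolding discounted_cost_def by (intro continuous_intros)
qed

lemma abs_discounted_cost_le: "0 \<le> t \<Longrightarrow> \<bar>discounted_cost t\<bar> \<le> Mg * exp (- lam * t)"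
  unfolding discounted_cost_def abs_mult
  using g_bound[OF y_in_Omega u_in] by (simp add: mult_right_mono)

lemma J_cont_eq_integral: "J_cont g lam y u = integral {0..} discounted_cost"
proof -
  have "discounted_cost absolutely_integrable_on {0..}"
    by (rule exp_dominated_integrable(1)[OF lam_pos discounted_cost_continuous
        abs_discounted_cost_le]) simp
  then have "integrable lebesgue (\<lambda>t. indicator {0..} t *\<^sub>R discounted_cost t)"
    by (simp add: set_integrable_def)
  moreover have "(\<lambda>t. indicator {0..} t *\<^sub>R discounted_cost t) \<in> borel_measurable lborel"
    using borel_measurable_continuous_on_indicator[OF _ discounted_cost_continuous] by simp
  ultimately have "set_integrable lborel {0..} discounted_cost"
    unfolding set_integrable_def using integrable_completion by blast
  then show ?thesis
    unfolding J_cont_def discounted_cost_def[symmetric]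
    by (rule set_borel_integral_eq_integral(2))
qed

context
  fixes \<T> :: "'a set set" and h :: real
  assumes tri: "triangulation \<T>" and cover: "\<Union>\<T> = \<Omega>" and h: "0 < h" "h \<le> h0"
begin

abbreviation yh :: "nat \<Rightarrow> 'a" where
  "yh \<equiv> yhat f \<T> h (\<lambda>i. u (real i * h)) (y 0)"

abbreviation gh :: "nat \<Rightarrow> real" where
  "gh n \<equiv> interp \<T> (\<lambda>z. g z (u (real n * h))) (yh n)"

lemma yhat_in_Omega: "yh n \<in> \<Omega>"
proof -
  have "yh n \<in> \<Union>\<T>"
  proof (rule yhat_in_invariant_set[OF tri])
    show "convex (\<Union>\<T>)" "y 0 \<in> \<Union>\<T>"
      using Omega_convex y0_in cover by simp_all
    fix m v assume "v \<in> \<Union>\<T>"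
    then show "v + h *\<^sub>R f v (u (real m * h)) \<in> \<Union>\<T>"
      using cover h by (simp add: Omega_invariant u_in)
  qed
  then show ?thesis
    using cover by simp
qed

lemma mesh_cover_nonneg: "0 \<le> mesh \<T>"
  using mesh_nonneg[OF tri] y0_in cover by auto

lemma interp_error_at_yhat:
  assumes "v \<in> Uad"
  shows "norm (interp \<T> (\<lambda>z. f z v) (yh n) - f (yh n) v) \<le> Lf * mesh \<T>"
    and "\<bar>interp \<T> (\<lambda>z. g z v) (yh n) - g (yh n) v\<bar> \<le> Lg * mesh \<T>"
proof -
  let ?z = "yh n"
  have z: "?z \<in> \<Union>\<T>"
    using yhat_in_Omega cover by simp
  show "norm (interp \<T> (\<lambda>z. f z v) ?z - f ?z v) \<le> Lf * mesh \<T>"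
  proof (rule norm_interp_diff_le[OF tri z])
    fix w assume "dist w ?z \<le> mesh \<T>"
    then show "norm (f w v - f ?z v) \<le> Lf * mesh \<T>"
      using f_lip_y[OF assms, of w ?z] mult_left_mono[OF _ Lf_nonneg] by (fastforce simp: dist_norm)
  qed
  have "norm (interp \<T> (\<lambda>z. g z v) ?z - g ?z v) \<le> Lg * mesh \<T>"
  proof (rule norm_interp_diff_le[OF tri z])
    fix w assume "dist w ?z \<le> mesh \<T>"
    then show "norm (g w v - g ?z v) \<le> Lg * mesh \<T>"
      using g_lip_y[OF assms, of w ?z] mult_left_mono[OF _ Lg_nonneg] by (fastforce simp: dist_norm)
  qed
  then show "\<bar>interp \<T> (\<lambda>z. g z v) ?z - g ?z v\<bar> \<le> Lg * mesh \<T>"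
    by simp
qed

lemma yhat_error:
  "norm (y (real n * h) - yh n)
    \<le> real n * h * exp (real n * h * Lf) * (Lf * mesh \<T> + Lf * (B + Lu) * h)"
proof (rule perturbed_euler_error[OF h(1)])
  show "0 \<le> Lf * mesh \<T>"
    using Lf_nonneg mesh_cover_nonneg by simp
  show "norm (f (y s) (u s)) \<le> B" if "s \<in> {0..real n * h}" for s
    using that by (simp add: norm_field_le)
  fix m
  let ?v = "u (real m * h)"
  have "yh (Suc m) - yh m - h *\<^sub>R f (yh m) ?v = h *\<^sub>R (interp \<T> (\<lambda>z. f z ?v) (yh m) - f (yh m) ?v)"
    by (simp add: scaleR_diff_right)
  also have "norm \<dots> \<le> h * (Lf * mesh \<T>)"
    using interp_error_at_yhat(1)[OF u_in, of "real m * h" m] h by (simp add: mult_left_mono)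
  finally show "norm (yh (Suc m) - yh m - h *\<^sub>R f (yh m) ?v) \<le> h * (Lf * mesh \<T>)" .
qed simp

lemma abs_gh_le: "\<bar>gh n\<bar> \<le> Mg"
proof -
  have "gh n \<in> cball 0 Mg"
    using yhat_in_Omega cover g_bound u_in h by (intro interp_in_convex[OF tri]) auto
  then show ?thesis
    by simp
qed

lemma running_cost_error:
  assumes t: "real n * h \<le> t" "t \<le> real n * h + h"
  shows "\<bar>g (y t) (u t) - gh n\<bar>
    \<le> Lg * ((B + Lu) * h + real n * h * exp (real n * h * Lf) * (Lf * mesh \<T> + Lf * (B + Lu) * h)
        + mesh \<T>)"
proof -
  let ?a = "real n * h" and ?z = "yh n"
  let ?E = "real n * h * exp (real n * h * Lf) * (Lf * mesh \<T> + Lf * (B + Lu) * h)"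
  have a: "0 \<le> ?a"
    using h by simp
  with t have t0: "0 \<le> t"
    by linarith
  have "norm (y t - y ?a) \<le> B * (t - ?a)"
    using t a by (intro norm_y_diff_le norm_field_le) (meson atLeastAtMost_iff order_trans)+
  also have "\<dots> \<le> B * h"
    using t B_nonneg by (intro mult_left_mono) auto
  finally have "norm (y t - ?z) \<le> B * h + ?E"
    using yhat_error[of n] norm_triangle_ineq[of "y t - y ?a" "y ?a - ?z"] by simp
  then have state: "\<bar>g (y t) (u ?a) - g ?z (u ?a)\<bar> \<le> Lg * (B * h + ?E)"
    by (rule order_trans[OF g_lip_y[OF u_in[OF a]] mult_left_mono[OF _ Lg_nonneg]])
  have "norm (u t - u ?a) \<le> Lu * h"
    using norm_u_diff_le[OF t0 a] t Lu_nonneg mult_left_mono[of "t - ?a" h Lu] by simp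
  then have control: "\<bar>g (y t) (u t) - g (y t) (u ?a)\<bar> \<le> Lg * (Lu * h)"
    by (rule order_trans[OF g_lip_u[OF u_in[OF t0] u_in[OF a]] mult_left_mono[OF _ Lg_nonneg]])
  have "\<bar>interp \<T> (\<lambda>z. g z (u ?a)) ?z - g ?z (u ?a)\<bar> \<le> Lg * mesh \<T>"
    by (rule interp_error_at_yhat(2)[OF u_in[OF a]])
  with state control show ?thesis
    by (simp add: algebra_simps abs_diff_le_iff)
qed

lemma discounted_cost_error:
  assumes lh: "lam * h \<le> 1" and t: "real n * h \<le> t" "t \<le> real n * h + h"
  shows "\<bar>discounted_cost t - (1 - lam * h) ^ n * gh n\<bar>
    \<le> Lg * ((B + Lu) * h + real n * h * exp (real n * h * Lf) * (Lf * mesh \<T> + Lf * (B + Lu) * h)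
        + mesh \<T>) + Mg * (lam * h + real n * (lam * h)\<^sup>2)"
proof -
  let ?e = "exp (- lam * t)"
  have "0 \<le> real n * h"
    using h by simp
  with t have "0 \<le> t"
    by linarith
  then have e: "0 \<le> ?e" "?e \<le> 1"
    using lam_pos by auto
  have "\<bar>discounted_cost t - (1 - lam * h) ^ n * gh n\<bar>
      = \<bar>(g (y t) (u t) - gh n) * ?e + gh n * (?e - (1 - lam * h) ^ n)\<bar>"
    unfolding discounted_cost_def by (simp add: algebra_simps)
  also have "\<dots> \<le> \<bar>g (y t) (u t) - gh n\<bar> * 1 + Mg * \<bar>?e - (1 - lam * h) ^ n\<bar>"
  proof (intro order_trans[OF abs_triangle_ineq] add_mono)
    show "\<bar>(g (y t) (u t) - gh n) * ?e\<bar> \<le> \<bar>g (y t) (u t) - gh n\<bar> * 1"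
      using mult_left_mono[OF e(2) abs_ge_zero[of "g (y t) (u t) - gh n"]] e(1)
      by (simp add: abs_mult)
    show "\<bar>gh n * (?e - (1 - lam * h) ^ n)\<bar> \<le> Mg * \<bar>?e - (1 - lam * h) ^ n\<bar>"
      using abs_gh_le[of n] by (simp add: abs_mult mult_right_mono)
  qed
  also have "\<dots> \<le> Lg * ((B + Lu) * h
        + real n * h * exp (real n * h * Lf) * (Lf * mesh \<T> + Lf * (B + Lu) * h) + mesh \<T>)
      + Mg * (lam * h + real n * (lam * h)\<^sup>2)"
    using running_cost_error[OF t] exp_approx_discount_factor[OF _ _ lh t] lam_pos h Mg_nonneg
    by (intro add_mono mult_left_mono) auto
  finally show ?thesis .
qed

lemma discounted_cost_error_le_horizon:
  assumes lh: "lam * h \<le> 1" and nT: "real n * h \<le> T" and t: "t \<in> {real n * h..real n * h + h}"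
  shows "\<bar>discounted_cost t - (1 - lam * h) ^ n * gh n\<bar>
    \<le> h * (Lg * (B + Lu) * (1 + T * exp (T * Lf) * Lf) + Mg * (lam + T * lam\<^sup>2))
      + mesh \<T> * (Lg * (T * exp (T * Lf) * Lf + 1))"
proof -
  let ?X = "exp (T * Lf)"
  have "0 \<le> real n * h"
    using h by simp
  with nT have T: "0 \<le> T"
    by linarith
  have "real n * h * exp (real n * h * Lf) \<le> T * ?X"
    using nT T Lf_nonneg h by (intro mult_mono) (auto simp: mult_right_mono)
  then have state: "real n * h * exp (real n * h * Lf) * (Lf * mesh \<T> + Lf * (B + Lu) * h)
      \<le> T * ?X * (Lf * mesh \<T> + Lf * (B + Lu) * h)"
    using Lf_nonneg mesh_cover_nonneg B_nonneg Lu_nonneg h by (intro mult_right_mono) auto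
  have discount: "real n * (lam * h)\<^sup>2 \<le> T * lam\<^sup>2 * h"
    using mult_right_mono[OF nT, of "lam\<^sup>2 * h"] h by (simp add: power2_eq_square mult_ac)
  have "\<bar>discounted_cost t - (1 - lam * h) ^ n * gh n\<bar>
    \<le> Lg * ((B + Lu) * h + real n * h * exp (real n * h * Lf)
        * (Lf * mesh \<T> + Lf * (B + Lu) * h) + mesh \<T>) + Mg * (lam * h + real n * (lam * h)\<^sup>2)"
    using discounted_cost_error[OF lh] t by simp
  also have "\<dots> \<le> Lg * ((B + Lu) * h + T * ?X * (Lf * mesh \<T> + Lf * (B + Lu) * h) + mesh \<T>)
      + Mg * (lam * h + T * lam\<^sup>2 * h)"
    using add_mono[OF mult_left_mono[OF add_right_mono[OF add_left_mono[OF state]] Lg_nonneg]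
        mult_left_mono[OF add_left_mono[OF discount] Mg_nonneg]] .
  also have "\<dots> = h * (Lg * (B + Lu) * (1 + T * ?X * Lf) + Mg * (lam + T * lam\<^sup>2))
      + mesh \<T> * (Lg * (T * ?X * Lf + 1))"
    by (simp add: algebra_simps power2_eq_square)
  finally show ?thesis .
qed

end

lemma cost_error_bound:
  assumes T: "0 \<le> T"
  obtains C where "\<And>\<T> h. triangulation \<T> \<Longrightarrow> \<Union>\<T> = \<Omega> \<Longrightarrow> 0 < h \<Longrightarrow> h \<le> h0 \<Longrightarrow> h \<le> 1 \<Longrightarrow>
    lam * h \<le> 1 \<Longrightarrow> \<bar>J_cont g lam y u - J_hk f g lam \<T> h (\<lambda>i. u (real i * h)) (y 0)\<bar>
      \<le> C * (h + mesh \<T>) + 2 * Mg * exp (- lam * T) / lam"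
proof -
  define T1 where "T1 = T + 1"
  define c1 where "c1 = Lg * (B + Lu) * (1 + T1 * exp (T1 * Lf) * Lf) + Mg * (lam + T1 * lam\<^sup>2)"
  define c2 where "c2 = Lg * (T1 * exp (T1 * Lf) * Lf + 1)"
  have T1: "0 \<le> T1" and c: "0 \<le> c1" "0 \<le> c2"
    using T Lg_nonneg B_nonneg Lu_nonneg Lf_nonneg Mg_nonneg lam_pos
    by (auto simp: T1_def c1_def c2_def)
  have "\<bar>J_cont g lam y u - J_hk f g lam \<T> h (\<lambda>i. u (real i * h)) (y 0)\<bar>
      \<le> T1 * (c1 + c2) * (h + mesh \<T>) + 2 * Mg * exp (- lam * T) / lam"
    if tri: "triangulation \<T>" and cover: "\<Union>\<T> = \<Omega>" and h: "0 < h" "h \<le> h0" "h \<le> 1"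
      and lh: "lam * h \<le> 1" for \<T> h
  proof -
    obtain N :: nat where N: "T \<le> real N * h" "real N * h \<le> T1"
      using grid_point_in_unit_window[OF T h(1,3)] unfolding T1_def .
    let ?G = "\<lambda>n. interp \<T> (\<lambda>z. g z (u (real n * h))) (yhat f \<T> h (\<lambda>i. u (real i * h)) (y 0) n)"
    have k: "0 \<le> mesh \<T>"
      by (rule mesh_cover_nonneg[OF tri cover h(1,2)])
    have "real n * h \<le> T1" if "n < N" for n
    proof -
      have "real n * h \<le> real N * h"
        using that h by (intro mult_right_mono) auto
      with N show ?thesis
        by linarith
    qed
    then have "\<bar>discounted_cost t - (1 - lam * h) ^ n * ?G n\<bar> \<le> h * c1 + mesh \<T> * c2"
      if "n < N" "t \<in> {real n * h..real n * h + h}" for n t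
      using that unfolding c1_def c2_def
      by (intro discounted_cost_error_le_horizon[OF tri cover h(1,2) lh]) auto
    then have "\<bar>integral {0..} discounted_cost - h * (\<Sum>n. (1 - lam * h) ^ n * ?G n)\<bar>
        \<le> real N * h * (h * c1 + mesh \<T> * c2) + 2 * Mg * exp (- lam * (real N * h)) / lam"
      by (intro discounted_integral_approx[OF lam_pos h(1) lh discounted_cost_continuous
          abs_discounted_cost_le abs_gh_le[OF tri cover h(1,2)]])
    also have "\<dots> \<le> T1 * (h * c1 + mesh \<T> * c2) + 2 * Mg * exp (- lam * T) / lam"
      using N h k c lam_pos Mg_nonneg
      by (intro add_mono mult_right_mono divide_right_mono mult_left_mono) auto
    also have "T1 * (h * c1 + mesh \<T> * c2) \<le> T1 * (c1 + c2) * (h + mesh \<T>)"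
      using T1 h k c by (simp add: algebra_simps mult_left_mono mult_right_mono add_mono)
    finally show ?thesis
      unfolding J_cont_eq_integral J_hk_def by simp
  qed
  then show ?thesis
    by (rule that)
qed

theorem J_hk_converges:
  "\<forall>\<epsilon>>0. \<exists>\<delta>>0. \<forall>h k \<T>. 0 < h \<and> h < \<delta> \<and> 0 < k \<and> k < \<delta> \<and>
     triangulation \<T> \<and> \<Union>\<T> = \<Omega> \<and> mesh \<T> = k \<longrightarrow>
     \<bar>J_cont g lam y u - J_hk f g lam \<T> h (\<lambda>i. u (real i * h)) (y 0)\<bar> < \<epsilon>"
proof (intro allI impI)
  fix \<epsilon> :: real assume \<epsilon>: "0 < \<epsilon>"
  have "\<forall>\<^sub>F T in at_top. 0 \<le> T \<and> 2 * Mg * exp (- lam * T) / lam < \<epsilon> / 2"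
    using \<epsilon> lam_pos by (intro eventually_conj eventually_ge_at_top eventually_exp_decay_less) auto
  then obtain T where T: "0 \<le> T" "2 * Mg * exp (- lam * T) / lam < \<epsilon> / 2"
    unfolding eventually_at_top_linorder by blast
  obtain C where C: "\<And>\<T> h. triangulation \<T> \<Longrightarrow> \<Union>\<T> = \<Omega> \<Longrightarrow> 0 < h \<Longrightarrow> h \<le> h0 \<Longrightarrow> h \<le> 1 \<Longrightarrow>
      lam * h \<le> 1 \<Longrightarrow> \<bar>J_cont g lam y u - J_hk f g lam \<T> h (\<lambda>i. u (real i * h)) (y 0)\<bar>
        \<le> C * (h + mesh \<T>) + 2 * Mg * exp (- lam * T) / lam"
    using cost_error_bound[OF T(1)] by blast
  define \<delta> where "\<delta> = min (min h0 1) (min (1 / lam) (\<epsilon> / (4 * (\<bar>C\<bar> + 1))))"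
  show "\<exists>\<delta>>0. \<forall>h k \<T>. 0 < h \<and> h < \<delta> \<and> 0 < k \<and> k < \<delta> \<and>
     triangulation \<T> \<and> \<Union>\<T> = \<Omega> \<and> mesh \<T> = k \<longrightarrow>
     \<bar>J_cont g lam y u - J_hk f g lam \<T> h (\<lambda>i. u (real i * h)) (y 0)\<bar> < \<epsilon>"
  proof (intro exI[of _ \<delta>] conjI allI impI)
    show "0 < \<delta>"
      using h0_pos lam_pos \<epsilon> by (simp add: \<delta>_def)
    fix h k :: real and \<T> :: "'a set set"
    assume "0 < h \<and> h < \<delta> \<and> 0 < k \<and> k < \<delta> \<and> triangulation \<T> \<and> \<Union>\<T> = \<Omega> \<and> mesh \<T> = k"
    then have h: "0 < h" "h < \<delta>" and k: "0 < k" "k < \<delta>" and tri: "triangulation \<T>"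
      and cover: "\<Union>\<T> = \<Omega>" and mesh: "mesh \<T> = k"
      by auto
    have "lam * h \<le> 1"
      using h lam_pos by (simp add: \<delta>_def field_simps)
    then have "\<bar>J_cont g lam y u - J_hk f g lam \<T> h (\<lambda>i. u (real i * h)) (y 0)\<bar>
        \<le> C * (h + k) + 2 * Mg * exp (- lam * T) / lam"
      using C[OF tri cover h(1)] h mesh by (simp add: \<delta>_def)
    also have "C * (h + k) \<le> \<bar>C\<bar> * (2 * \<delta>)"
      using h k by (intro order_trans[OF abs_ge_self[THEN mult_right_mono] mult_left_mono]) auto
    also have "\<bar>C\<bar> * (2 * \<delta>) \<le> \<bar>C\<bar> * (2 * (\<epsilon> / (4 * (\<bar>C\<bar> + 1))))"
      unfolding \<delta>_def by (intro mult_left_mono) auto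
    also have "\<dots> < \<epsilon> / 2"
      using \<epsilon> by (simp add: field_simps)
    finally show "\<bar>J_cont g lam y u - J_hk f g lam \<T> h (\<lambda>i. u (real i * h)) (y 0)\<bar> < \<epsilon>"
      using T(2) by linarith
  qed
qed

end

theorem lemma1:
  fixes f :: "real^'n \<Rightarrow> real^'m \<Rightarrow> real^'n"
    and g :: "real^'n \<Rightarrow> real^'m \<Rightarrow> real"
    and lam Lf Lg Lu Mf Mg :: real
    and Uad :: "(real^'m) set"
    and \<Omega> :: "(real^'n) set"
    and u :: "real \<Rightarrow> real^'m"
    and y :: "real \<Rightarrow> real^'n"
    and y0 :: "real^'n"
  assumes lam: "lam > 0"
    and U_compact: "compact Uad" and U_convex: "convex Uad"
    and f_lip_y: "\<And>z z' v. v \<in> Uad \<Longrightarrow> norm (f z v - f z' v) \<le> Lf * norm (z - z')"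
    and f_lip_u: "\<And>z v v'. v \<in> Uad \<Longrightarrow> v' \<in> Uad \<Longrightarrow> norm (f z v - f z v') \<le> Lf * norm (v - v')"
    and g_lip_y: "\<And>z z' v. v \<in> Uad \<Longrightarrow> \<bar>g z v - g z' v\<bar> \<le> Lg * norm (z - z')"
    and g_lip_u: "\<And>z v v'. v \<in> Uad \<Longrightarrow> v' \<in> Uad \<Longrightarrow> \<bar>g z v - g z v'\<bar> \<le> Lg * norm (v - v')"
    and f_cont: "continuous_on UNIV (\<lambda>(z, v). f z v)"
    and g_cont: "continuous_on UNIV (\<lambda>(z, v). g z v)"
    and Omega_poly: "polyhedron \<Omega>" and Omega_bdd: "bounded \<Omega>"
    and f_bound: "\<And>z v i. z \<in> \<Omega> \<Longrightarrow> v \<in> Uad \<Longrightarrow> \<bar>f z v $ i\<bar> \<le> Mf"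
    and g_bound: "\<And>z v. z \<in> \<Omega> \<Longrightarrow> v \<in> Uad \<Longrightarrow> \<bar>g z v\<bar> \<le> Mg"
    and invariant: "\<exists>h0>0. \<forall>h. 0 < h \<and> h \<le> h0 \<longrightarrow>
                       (\<forall>z\<in>\<Omega>. \<forall>v\<in>Uad. z + h *\<^sub>R f z v \<in> \<Omega>)"
    and u_meas: "set_borel_measurable lborel {0..} u"
    and u_L2: "set_integrable lborel {0..} (\<lambda>t. (norm (u t))\<^sup>2)"
    and u_adm: "AE t in lborel. 0 \<le> t \<longrightarrow> u t \<in> Uad"
    and u_lip: "\<And>t s. 0 \<le> t \<Longrightarrow> 0 \<le> s \<Longrightarrow> norm (u t - u s) \<le> Lu * \<bar>t - s\<bar>"
    and y0_in: "y0 \<in> \<Omega>"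
    and y_init: "y 0 = y0"
    and y_ode: "\<And>t. 0 \<le> t \<Longrightarrow> (y has_vector_derivative f (y t) (u t)) (at t within {0..})"
  shows "\<forall>\<epsilon>>0. \<exists>\<delta>>0. \<forall>h k \<T>. 0 < h \<and> h < \<delta> \<and> 0 < k \<and> k < \<delta> \<and>
            triangulation \<T> \<and> \<Union>\<T> = \<Omega> \<and> mesh \<T> = k \<longrightarrow>
            \<bar>J_cont g lam y u - J_hk f g lam \<T> h (\<lambda>i. u (real i * h)) y0\<bar> < \<epsilon>"
proof -
  (* Continuity of f and g follows from their Lipschitz bounds. *)
  have Lu: "0 \<le> Lu"
    using u_lip[of 1 0] by (simp add: order_trans[OF norm_ge_zero])
  then have u_lipschitz: "Lu-lipschitz_on {0..} u"
    using u_lip by (intro lipschitz_onI) (auto simp: dist_norm dist_real_def)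
  have u_in: "u t \<in> Uad" if "0 \<le> t" for t
    using lipschitz_on_continuous_on[OF u_lipschitz] compact_imp_closed[OF U_compact] u_adm that
    by (rule continuous_on_AE_in_closed)
  have Lf: "0 \<le> Lf"
    using f_lip_y[OF u_in[of 0]] by (intro lipschitz_constant_nonneg[of "\<lambda>z. f z (u 0)"]) auto
  have Lg: "0 \<le> Lg"
    using g_lip_y[OF u_in[of 0]] by (intro lipschitz_constant_nonneg[of "\<lambda>z. g z (u 0)"]) auto
  have f_norm_bound: "norm (f z v) \<le> real CARD('n) * Mf" if "z \<in> \<Omega>" "v \<in> Uad" for z v
    using norm_le_l1_cart[of "f z v"] sum_bounded_above[of UNIV "\<lambda>i. \<bar>f z v $ i\<bar>" Mf]
      f_bound[OF that] by simp
  obtain h0 where h0: "0 < h0" "\<And>h z v. 0 < h \<Longrightarrow> h \<le> h0 \<Longrightarrow> z \<in> \<Omega> \<Longrightarrow> v \<in> Uad \<Longrightarrow>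
      z + h *\<^sub>R f z v \<in> \<Omega>"
    using invariant by blast
  interpret discounted_control_problem f Uad Lf Lu u y g lam Lg "real CARD('n) * Mf" Mg h0 \<Omega>
    using f_lip_y f_lip_u Lf u_in u_lipschitz y_ode g_lip_y g_lip_u Lg lam
      polyhedron_imp_closed[OF Omega_poly] polyhedron_imp_convex[OF Omega_poly]
      f_norm_bound g_bound h0 y0_in y_init
    by unfold_locales auto
  show ?thesis
    using J_hk_converges by (simp add: y_init)
qed

end
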